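(* For every non-empty clique $C$ of $G$, $\mathbf{x}(C)$ is a global maximizer of the problem $\max\{f(\mathbf{x}):\mathbf{x}\in\Delta\}$ if and only if $C$ is a maximum clique.
   Context: Let $G=(\mathcal{V},\mathcal{E})$ be a simple undirected graph on vertex set $\mathcal{V}=\{1,\dots,n\}$ with adjacency matrix $\mathbf{A}=(a_{ij})$ ($a_{ij}=1$ if $(i,j)\in\mathcal{E}$, else $0$; $a_{ii}=0$). A clique is a subset $C\subseteq\mathcal{V}$ with $(i,j)\in\mathcal{E}$ for all distinct $i,j\in C$; a maximum clique is one of largest cardinality. Let $\Delta=\{\mathbf{x}\in\mathbb{R}^n:\mathbf{0}\le\mathbf{x}\le\mathbf{1},\ \mathbf{1}^{\mathsf T}\mathbf{x}=1\}$. For a non-empty clique $C$, $\mathbf{x}(C)\in\Delta$ has $x(C)_i=1/|C|$ for $i\in C$ and $0$ otherwise. For $\mathbf{x}\in\Delta$, $\mathcal{P}(\mathbf{x})$ is the set of vectors in $\Delta$ obtained by permuting the coordinates of $\mathbf{x}$. Let $\Phi:X\to\mathbb{R}$ be twice continuously differentiable on an open set $X\supset\Delta$, satisfying for every $\mathbf{x}\in\Delta$: (C1) $\nabla^2\Phi(\mathbf{x})$ is positive semidefinite; (C2) $\|\nabla^2\Phi(\mathbf{x})\|_2<2$; (C3) $\Phi$ is constant on $\mathcal{P}(\mathbf{x})$. Define $f(\mathbf{x})=\mathbf{x}^{\mathsf T}\mathbf{A}\mathbf{x}+\Phi(\mathbf{x})$. *)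

theory Defs
  imports "HOL-Analysis.Analysis" "HOL-Combinatorics.Permutations"
begin

text \<open>Vertices are the elements of the finite type 'n (playing the role of {1..n});
  vectors in R^n are real^'n, the adjacency matrix is real^'n^'n.\<close>

definition adjacency_matrix :: "real^'n^'n \<Rightarrow> bool" where
  "adjacency_matrix A \<longleftrightarrow>
     (\<forall>i j. A $ i $ j = 0 \<or> A $ i $ j = 1) \<and>
     (\<forall>i j. A $ i $ j = A $ j $ i) \<and> (\<forall>i. A $ i $ i = 0)"

definition is_clique :: "real^'n^'n \<Rightarrow> 'n set \<Rightarrow> bool" where
  "is_clique A C \<longleftrightarrow> (\<forall>i\<in>C. \<forall>j\<in>C. i \<noteq> j \<longrightarrow> A $ i $ j = 1)"

definition is_max_clique :: "real^'n^'n \<Rightarrow> 'n set \<Rightarrow> bool" where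
  "is_max_clique A C \<longleftrightarrow> is_clique A C \<and> (\<forall>D. is_clique A D \<longrightarrow> card D \<le> card C)"

definition Delta_set :: "(real^'n) set" where
  "Delta_set = {x. (\<forall>i. 0 \<le> x $ i \<and> x $ i \<le> 1) \<and> (\<Sum>i\<in>UNIV. x $ i) = 1}"

definition clique_vec :: "'n set \<Rightarrow> real^'n" where
  "clique_vec C = (\<chi> i. if i \<in> C then 1 / real (card C) else 0)"

definition perm_set :: "real^'n \<Rightarrow> (real^'n) set" where
  "perm_set x = {(\<chi> i. x $ (\<sigma> i)) | \<sigma>. \<sigma> permutes (UNIV :: 'n set)}"

end

theory Submission
  imports Defs
begin

text \<open>On the face of \<Delta> spanned by a clique S the quadratic part of f is \<open>1 - |x|\<^sup>2\<close>, and the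
  bounds \<open>0 \<le> \<nabla>\<^sup>2\<Phi> < 2\<close> make \<open>\<Phi>(x) - |x|\<^sup>2\<close> strictly concave there. By permutation
  invariance the gradient of \<Phi> at the barycentre \<open>x(S)\<close> is constant on S, so \<open>x(S)\<close> is the
  unique maximiser of f on that face, with value \<open>1 - 1/|S| + \<Phi>(x(S))\<close>. This value depends only
  on |S| and strictly increases along nested faces, hence with |S|. Finally, along the direction
  \<open>e\<^sub>i - e\<^sub>j\<close> of a non-edge the quadratic part is affine and \<Phi> is convex, so f can be increased
  while emptying one coordinate; repeating this, every point of \<Delta> is dominated by the
  barycentre of some clique.\<close>

lemma Delta_set_iff: "x \<in> Delta_set \<longleftrightarrow> (\<forall>i. 0 \<le> x $ i) \<and> (\<Sum>i\<in>UNIV. x $ i) = 1"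
proof
  assume x: "(\<forall>i. 0 \<le> x $ i) \<and> (\<Sum>i\<in>UNIV. x $ i) = 1"
  have "x $ i \<le> (\<Sum>l\<in>UNIV. x $ l)" for i
    by (rule member_le_sum) (use x in auto)
  with x show "x \<in> Delta_set" unfolding Delta_set_def by auto
qed (auto simp: Delta_set_def)

lemma convex_Delta_set: "convex Delta_set"
  unfolding convex_def by (simp add: Delta_set_iff sum.distrib sum_distrib_left[symmetric])

lemma shift_axis_nth:
  "(y + s *\<^sub>R (axis i 1 - axis j 1)) $ l = y $ l + (if l = i then s else 0) - (if l = j then s else 0)"
  by (simp add: axis_def)

lemma shift_axis_in_Delta_set:
  assumes "y \<in> Delta_set" "i \<noteq> j" "0 \<le> y $ i + s" "0 \<le> y $ j - s"
  shows "y + s *\<^sub>R (axis i 1 - axis j 1) \<in> Delta_set"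
proof -
  have "0 \<le> (y + s *\<^sub>R (axis i 1 - axis j 1)) $ l" for l
    using assms unfolding shift_axis_nth by (auto simp: Delta_set_iff)
  moreover have "(\<Sum>l\<in>UNIV. (y + s *\<^sub>R (axis i 1 - axis j 1)) $ l) = 1"
    using assms unfolding shift_axis_nth by (simp add: Delta_set_iff sum.distrib sum_subtractf)
  ultimately show ?thesis by (simp add: Delta_set_iff)
qed

lemma transfer_mass:
  fixes y :: "real^'n"
  assumes y: "y \<in> Delta_set" and ij: "i \<noteq> j"
  shows "y + y $ i *\<^sub>R (axis j 1 - axis i 1) \<in> Delta_set"
    and "{l. (y + y $ i *\<^sub>R (axis j 1 - axis i 1)) $ l \<noteq> 0} \<subseteq> insert j {l. y $ l \<noteq> 0} - {i}"
proof -
  have "0 \<le> y $ j" "0 \<le> y $ i" using y by (simp_all add: Delta_set_iff)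
  then show "y + y $ i *\<^sub>R (axis j 1 - axis i 1) \<in> Delta_set"
    using ij by (intro shift_axis_in_Delta_set[OF y]) auto
  show "{l. (y + y $ i *\<^sub>R (axis j 1 - axis i 1)) $ l \<noteq> 0} \<subseteq> insert j {l. y $ l \<noteq> 0} - {i}"
    unfolding shift_axis_nth using ij by auto
qed

lemma clique_vec_nth: "clique_vec C $ i = (if i \<in> C then 1 / real (card C) else 0)"
  by (simp add: clique_vec_def)

lemma clique_vec_in_Delta_set:
  fixes C :: "'n::finite set"
  assumes "C \<noteq> {}"
  shows "clique_vec C \<in> Delta_set"
proof -
  have "(\<Sum>l\<in>UNIV. clique_vec C $ l) = (\<Sum>l\<in>C. 1 / real (card C))"
    by (rule sum.mono_neutral_cong_right) (auto simp: clique_vec_nth)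
  then show ?thesis
    using assms by (simp add: Delta_set_iff clique_vec_nth)
qed

lemma inner_clique_vec:
  fixes y :: "real^'n"
  assumes y: "y \<in> Delta_set" and supp: "\<And>l. l \<notin> S \<Longrightarrow> y $ l = 0"
  shows "y \<bullet> clique_vec S = 1 / real (card S)"
proof -
  have "y \<bullet> clique_vec S = (\<Sum>l\<in>UNIV. y $ l) / real (card S)"
    unfolding inner_vec_def sum_divide_distrib
    by (rule sum.cong) (use supp in \<open>auto simp: clique_vec_nth\<close>)
  then show ?thesis using y by (simp add: Delta_set_iff)
qed

lemma inner_clique_vec_self: "C \<noteq> {} \<Longrightarrow> clique_vec C \<bullet> clique_vec C = 1 / real (card C)"
  by (rule inner_clique_vec[OF clique_vec_in_Delta_set]) (auto simp: clique_vec_nth)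

lemma exists_permutes_preimage:
  fixes S S' :: "'n::finite set"
  assumes "card S = card S'"
  obtains \<sigma> where "\<sigma> permutes (UNIV :: 'n set)" "\<And>i. \<sigma> i \<in> S \<longleftrightarrow> i \<in> S'"
proof -
  obtain f where f: "bij_betw f S' S" using finite_same_card_bij[of S' S] assms by auto
  have "card (- S') = card (- S)"
    using assms by (simp add: Compl_eq_Diff_UNIV card_Diff_subset)
  then obtain h where h: "bij_betw h (- S') (- S)" using finite_same_card_bij[of "- S'" "- S"] by auto
  define \<sigma> where "\<sigma> = (\<lambda>x. if x \<in> S' then f x else h x)"
  have "bij_betw \<sigma> (S' \<union> - S') (S \<union> - S)"
    unfolding \<sigma>_def by (rule bij_betw_disjoint_Un[OF f h]) auto
  then have "\<sigma> permutes UNIV" by (intro bij_imp_permutes) auto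
  moreover have "\<sigma> i \<in> S \<longleftrightarrow> i \<in> S'" for i
    using f h unfolding \<sigma>_def bij_betw_def by auto
  ultimately show ?thesis by (rule that)
qed

lemma clique_vec_in_perm_set:
  assumes "card S = card S'"
  shows "clique_vec S' \<in> perm_set (clique_vec S)"
proof -
  obtain \<sigma> where \<sigma>: "\<sigma> permutes UNIV" "\<And>i. \<sigma> i \<in> S \<longleftrightarrow> i \<in> S'"
    using exists_permutes_preimage[OF assms] by blast
  have "clique_vec S' = (\<chi> i. clique_vec S $ \<sigma> i)"
    using \<sigma>(2) assms by (simp add: vec_eq_iff clique_vec_nth)
  then show ?thesis unfolding perm_set_def using \<sigma>(1) by blast
qed

lemma swap_in_perm_set: "(\<chi> l. x $ Transposition.transpose i j l) \<in> perm_set x"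
  unfolding perm_set_def using permutes_swap_id[of i UNIV j] by blast

lemma quadratic_form_clique:
  fixes A :: "real^'n^'n" and y :: "real^'n"
  assumes adj: "adjacency_matrix A" and cl: "is_clique A S" and y: "y \<in> Delta_set"
    and supp: "\<And>l. l \<notin> S \<Longrightarrow> y $ l = 0"
  shows "y \<bullet> (A *v y) = 1 - y \<bullet> y"
proof -
  have entry: "y $ i * (A $ i $ j * y $ j) = y $ i * y $ j - (if i = j then y $ i * y $ j else 0)" for i j
  proof (cases "y $ i = 0 \<or> y $ j = 0")
    case False
    then have "i \<in> S" "j \<in> S" using supp by auto
    then show ?thesis using adj cl unfolding adjacency_matrix_def is_clique_def by auto
  qed auto
  have "y \<bullet> (A *v y) = (\<Sum>i\<in>UNIV. \<Sum>j\<in>UNIV. y $ i * (A $ i $ j * y $ j))"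
    by (simp add: inner_vec_def matrix_vector_mult_def sum_distrib_left)
  also have "\<dots> = (\<Sum>i\<in>UNIV. y $ i) * (\<Sum>j\<in>UNIV. y $ j) - y \<bullet> y"
    unfolding entry by (simp add: sum_subtractf sum_product inner_vec_def)
  finally show ?thesis using y by (simp add: Delta_set_iff)
qed

lemma quadratic_form_line:
  fixes A :: "real^'n^'n"
  shows "(y + t *\<^sub>R e) \<bullet> (A *v (y + t *\<^sub>R e))
     = y \<bullet> (A *v y) + t * (e \<bullet> (A *v y) + y \<bullet> (A *v e)) + t\<^sup>2 * (e \<bullet> (A *v e))"
  by (simp add: matrix_vector_right_distrib inner_add_left inner_add_right
      matrix_vector_mult_scaleR algebra_simps power2_eq_square)

lemma quadratic_form_non_edge:
  fixes A :: "real^'n^'n"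
  assumes "adjacency_matrix A" and "A $ i $ j = 0"
  shows "(axis i 1 - axis j 1) \<bullet> (A *v (axis i 1 - axis j 1)) = 0"
  using assms unfolding adjacency_matrix_def
  by (simp add: matrix_vector_mult_basis matrix_vector_mult_diff_distrib inner_diff_left
      inner_diff_right inner_axis' column_def)

lemma quadratic_form_less_onorm:
  fixes M :: "real^'n^'n"
  assumes "onorm (\<lambda>v. M *v v) < c" "d \<noteq> 0"
  shows "d \<bullet> (M *v d) < c * (norm d)\<^sup>2"
proof -
  have "d \<bullet> (M *v d) \<le> norm d * norm (M *v d)" by (rule norm_cauchy_schwarz)
  also have "\<dots> \<le> norm d * (onorm (\<lambda>v. M *v v) * norm d)"
    by (rule mult_left_mono[OF onorm]) auto
  also have "\<dots> < norm d * (c * norm d)"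
    using assms by (intro mult_strict_left_mono mult_strict_right_mono) auto
  finally show ?thesis by (simp add: power2_eq_square mult.commute mult.left_commute)
qed

lemma second_order_taylor_segment:
  fixes f :: "real^'n \<Rightarrow> real" and g :: "real^'n \<Rightarrow> real^'n" and H :: "real^'n \<Rightarrow> real^'n^'n"
  assumes f': "\<And>z. z \<in> closed_segment x y \<Longrightarrow> (f has_derivative (\<lambda>h. g z \<bullet> h)) (at z)"
    and g': "\<And>z. z \<in> closed_segment x y \<Longrightarrow> (g has_derivative (\<lambda>h. H z *v h)) (at z)"
  obtains z where "z \<in> closed_segment x y"
    and "f y = f x + g x \<bullet> (y - x) + (y - x) \<bullet> (H z *v (y - x)) / 2"
proof -
  define d where "d = y - x"
  define p where "p t = x + t *\<^sub>R d" for t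
  have p_segment: "p t \<in> closed_segment x y" if "0 \<le> t" "t \<le> 1" for t
    using that unfolding p_def d_def closed_segment_def
    by (auto simp: algebra_simps intro!: exI[where x = t])
  have p': "(p has_derivative (\<lambda>s. s *\<^sub>R d)) (at t)" for t
    unfolding p_def by (auto intro!: derivative_eq_intros)
  define diff :: "nat \<Rightarrow> real \<Rightarrow> real" where
    "diff m = (if m = 0 then f \<circ> p else if m = 1 then (\<lambda>t. g (p t) \<bullet> d) else (\<lambda>t. d \<bullet> (H (p t) *v d)))"
    for m
  have "(diff m has_real_derivative diff (Suc m) t) (at t)" if "m < 2" "0 \<le> t" "t \<le> 1" for m t
  proof -
    have "((f \<circ> p) has_derivative (\<lambda>s. g (p t) \<bullet> (s *\<^sub>R d))) (at t)"
      using has_derivative_compose[OF p' f'[OF p_segment[OF that(2,3)]]] by (simp add: o_def)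
    moreover have "((\<lambda>t. g (p t) \<bullet> d) has_derivative (\<lambda>s. (H (p t) *v (s *\<^sub>R d)) \<bullet> d)) (at t)"
      using has_derivative_inner_left[OF has_derivative_compose[OF p' g'[OF p_segment[OF that(2,3)]]]] .
    ultimately show ?thesis
      using that unfolding diff_def has_field_derivative_def
      by (auto elim!: less_2_cases has_derivative_eq_rhs
          simp: fun_eq_iff matrix_vector_mult_scaleR inner_commute)
  qed
  then obtain t where t: "0 < t" "t < 1"
    and "diff 0 1 = (\<Sum>m<2. diff m 0 / fact m * 1 ^ m) + diff 2 t / fact 2 * 1 ^ 2"
    using Maclaurin[of 1 2 diff "f \<circ> p"] by (auto simp: diff_def)
  then have "f y = f x + g x \<bullet> (y - x) + (y - x) \<bullet> (H (p t) *v (y - x)) / 2"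
    by (simp add: diff_def p_def d_def numeral_2_eq_2)
  with p_segment t show ?thesis using that[of "p t"] by auto
qed

locale symmetric_regularizer =
  fixes \<Phi> :: "real^'n \<Rightarrow> real" and g :: "real^'n \<Rightarrow> real^'n" and H :: "real^'n \<Rightarrow> real^'n^'n"
  assumes grad: "\<And>x. x \<in> Delta_set \<Longrightarrow> (\<Phi> has_derivative (\<lambda>h. g x \<bullet> h)) (at x)"
    and hess: "\<And>x. x \<in> Delta_set \<Longrightarrow> (g has_derivative (\<lambda>h. H x *v h)) (at x)"
    and hess_psd: "\<And>x v. x \<in> Delta_set \<Longrightarrow> 0 \<le> v \<bullet> (H x *v v)"
    and hess_norm: "\<And>x. x \<in> Delta_set \<Longrightarrow> onorm (\<lambda>v. H x *v v) < 2"
    and perm_invariant: "\<And>x y. x \<in> Delta_set \<Longrightarrow> y \<in> perm_set x \<Longrightarrow> \<Phi> y = \<Phi> x"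
begin

lemma taylor_Delta_set:
  assumes "x \<in> Delta_set" "y \<in> Delta_set"
  obtains z where "z \<in> Delta_set" "\<Phi> y = \<Phi> x + g x \<bullet> (y - x) + (y - x) \<bullet> (H z *v (y - x)) / 2"
proof -
  have segment: "closed_segment x y \<subseteq> Delta_set"
    by (rule closed_segment_subset[OF assms convex_Delta_set])
  obtain z where "z \<in> closed_segment x y"
    and "\<Phi> y = \<Phi> x + g x \<bullet> (y - x) + (y - x) \<bullet> (H z *v (y - x)) / 2"
    by (rule second_order_taylor_segment[of x y \<Phi> g H]) (use segment grad hess in auto)
  with segment show ?thesis by (intro that) auto
qed

lemma Phi_ge_linearization:
  assumes "x \<in> Delta_set" "y \<in> Delta_set"
  shows "\<Phi> x + g x \<bullet> (y - x) \<le> \<Phi> y"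
proof -
  obtain z where "z \<in> Delta_set" "\<Phi> y = \<Phi> x + g x \<bullet> (y - x) + (y - x) \<bullet> (H z *v (y - x)) / 2"
    using taylor_Delta_set[OF assms] .
  with hess_psd[of z "y - x"] show ?thesis by simp
qed

lemma Phi_less_linearization:
  assumes "x \<in> Delta_set" "y \<in> Delta_set" "y \<noteq> x"
  shows "\<Phi> y < \<Phi> x + g x \<bullet> (y - x) + (norm (y - x))\<^sup>2"
proof -
  obtain z where "z \<in> Delta_set" "\<Phi> y = \<Phi> x + g x \<bullet> (y - x) + (y - x) \<bullet> (H z *v (y - x)) / 2"
    using taylor_Delta_set[OF assms(1,2)] .
  moreover have "(y - x) \<bullet> (H z *v (y - x)) < 2 * (norm (y - x))\<^sup>2"
    using quadratic_form_less_onorm[OF hess_norm[OF \<open>z \<in> Delta_set\<close>]] assms(3) by simp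
  ultimately show ?thesis by simp
qed

lemma Phi_swap: "x \<in> Delta_set \<Longrightarrow> \<Phi> (\<chi> l. x $ Transposition.transpose i j l) = \<Phi> x"
  by (rule perm_invariant[OF _ swap_in_perm_set])

lemma gradient_clique_vec_gap_less:
  assumes S: "S \<noteq> {}" and i: "i \<in> S" and j: "j \<in> S" and ij: "i \<noteq> j"
    and t: "0 < t" "t \<le> 1 / real (card S)"
  shows "g (clique_vec S) $ j - g (clique_vec S) $ i < t"
proof -
  define c where "c = clique_vec S"
  define e :: "real^'n" where "e = axis i 1 - axis j 1"
  have c: "c \<in> Delta_set" "c $ i = 1 / real (card S)" "c $ j = 1 / real (card S)"
    using clique_vec_in_Delta_set[OF S] i j unfolding c_def by (auto simp: clique_vec_nth)
  have plus: "c + t *\<^sub>R e \<in> Delta_set"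
    unfolding e_def by (rule shift_axis_in_Delta_set) (use c t ij in auto)
  have minus: "c + (- t) *\<^sub>R e \<in> Delta_set"
    unfolding e_def by (rule shift_axis_in_Delta_set) (use c t ij in auto)
  \<comment> \<open>the two points differ by swapping coordinates i and j, since \<open>c $ i = c $ j\<close>\<close>
  have swap: "c + (- t) *\<^sub>R e = (\<chi> l. (c + t *\<^sub>R e) $ Transposition.transpose i j l)"
    unfolding e_def vec_eq_iff shift_axis_nth using c ij by (auto simp: Transposition.transpose_def)
  have "norm (t *\<^sub>R e) ^ 2 = 2 * t\<^sup>2"
    unfolding e_def power2_norm_eq_inner using ij
    by (simp add: inner_diff_left inner_diff_right inner_axis_axis power2_eq_square)
  moreover have "(c + t *\<^sub>R e) $ i \<noteq> c $ i"
    using t ij unfolding e_def shift_axis_nth by simp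
  then have "c + t *\<^sub>R e \<noteq> c" by auto
  ultimately have "\<Phi> (c + t *\<^sub>R e) < \<Phi> c + t * (g c \<bullet> e) + 2 * t\<^sup>2"
    using Phi_less_linearization[OF c(1) plus] by simp
  also have "\<Phi> (c + t *\<^sub>R e) = \<Phi> (c + (- t) *\<^sub>R e)"
    unfolding swap by (rule Phi_swap[OF plus, symmetric])
  finally have "\<Phi> c - t * (g c \<bullet> e) < \<Phi> c + t * (g c \<bullet> e) + 2 * t\<^sup>2"
    using Phi_ge_linearization[OF c(1) minus] by simp
  moreover have "g c \<bullet> e = g c $ i - g c $ j"
    unfolding e_def by (simp add: inner_diff_right inner_axis)
  ultimately have "t * (g c $ j - g c $ i) < t * t" by (simp add: power2_eq_square algebra_simps)
  with t show ?thesis by (simp add: c_def)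
qed

lemma gradient_clique_vec_le:
  assumes S: "S \<noteq> {}" and i: "i \<in> S" and j: "j \<in> S"
  shows "g (clique_vec S) $ j \<le> g (clique_vec S) $ i"
proof (rule ccontr)
  assume "\<not> ?thesis"
  moreover have "0 < 1 / real (card S)" using S by (simp add: card_gt_0_iff)
  ultimately show False
    using gradient_clique_vec_gap_less[OF S i j,
        of "min (g (clique_vec S) $ j - g (clique_vec S) $ i) (1 / real (card S))"]
    by (cases "i = j") auto
qed

lemma gradient_clique_vec_eq:
  "S \<noteq> {} \<Longrightarrow> i \<in> S \<Longrightarrow> j \<in> S \<Longrightarrow> g (clique_vec S) $ i = g (clique_vec S) $ j"
  using gradient_clique_vec_le[of S i j] gradient_clique_vec_le[of S j i] by simp

lemma gradient_clique_vec_orthogonal: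
  assumes S: "S \<noteq> {}" and y: "y \<in> Delta_set" and supp: "\<And>l. l \<notin> S \<Longrightarrow> y $ l = 0"
  shows "g (clique_vec S) \<bullet> (y - clique_vec S) = 0"
proof -
  obtain i0 where i0: "i0 \<in> S" using S by auto
  define c where "c = clique_vec S"
  have c: "c \<in> Delta_set" unfolding c_def by (rule clique_vec_in_Delta_set[OF S])
  have supp_diff: "y $ l = c $ l" if "l \<notin> S" for l
    using supp[OF that] that by (simp add: c_def clique_vec_nth)
  have "g c \<bullet> (y - c) = (\<Sum>l\<in>UNIV. g c $ l * (y - c) $ l)"
    by (simp add: inner_vec_def)
  also have "\<dots> = (\<Sum>l\<in>S. g c $ l * (y - c) $ l)"
    by (rule sum.mono_neutral_right) (auto simp: supp_diff)
  also have "\<dots> = g c $ i0 * (\<Sum>l\<in>S. (y - c) $ l)"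
    unfolding sum_distrib_left
    by (rule sum.cong) (use gradient_clique_vec_eq[OF S _ i0] in \<open>auto simp: c_def\<close>)
  also have "(\<Sum>l\<in>S. (y - c) $ l) = (\<Sum>l\<in>UNIV. (y - c) $ l)"
    by (rule sum.mono_neutral_left) (auto simp: supp_diff)
  finally show ?thesis using y c by (simp add: Delta_set_iff sum_subtractf c_def)
qed

lemma Phi_le_clique_vec:
  assumes S: "S \<noteq> {}" and y: "y \<in> Delta_set" and supp: "\<And>l. l \<notin> S \<Longrightarrow> y $ l = 0"
  shows "y \<noteq> clique_vec S \<Longrightarrow> \<Phi> y + 1 / real (card S) < \<Phi> (clique_vec S) + y \<bullet> y"
    and "\<Phi> y + 1 / real (card S) \<le> \<Phi> (clique_vec S) + y \<bullet> y"
proof -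
  define c where "c = clique_vec S"
  have c: "c \<in> Delta_set" unfolding c_def by (rule clique_vec_in_Delta_set[OF S])
  have "(norm (y - c))\<^sup>2 = y \<bullet> y - 2 * (y \<bullet> c) + c \<bullet> c"
    by (simp add: power2_norm_eq_inner inner_diff_left inner_diff_right inner_commute)
  also have "\<dots> = y \<bullet> y - 1 / real (card S)"
    using inner_clique_vec[OF y supp] inner_clique_vec_self[OF S] by (simp add: c_def)
  finally have "(norm (y - c))\<^sup>2 = y \<bullet> y - 1 / real (card S)" .
  with Phi_less_linearization[OF c y] gradient_clique_vec_orthogonal[OF S y supp]
  show strict: "y \<noteq> clique_vec S \<Longrightarrow> \<Phi> y + 1 / real (card S) < \<Phi> (clique_vec S) + y \<bullet> y"
    by (simp add: c_def)
  show "\<Phi> y + 1 / real (card S) \<le> \<Phi> (clique_vec S) + y \<bullet> y"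
    using strict inner_clique_vec_self[OF S] by (cases "y = clique_vec S") auto
qed

definition clique_value :: "'n set \<Rightarrow> real" where
  "clique_value S = 1 - 1 / real (card S) + \<Phi> (clique_vec S)"

definition objective :: "real^'n^'n \<Rightarrow> real^'n \<Rightarrow> real" where
  "objective A y = y \<bullet> (A *v y) + \<Phi> y"

lemma objective_clique_vec:
  assumes "adjacency_matrix A" "is_clique A S" "S \<noteq> {}"
  shows "objective A (clique_vec S) = clique_value S"
  using quadratic_form_clique[OF assms(1,2) clique_vec_in_Delta_set[OF assms(3)]]
    inner_clique_vec_self[OF assms(3)]
  by (simp add: objective_def clique_value_def clique_vec_nth)

lemma objective_le_clique_value_on_face:
  assumes "adjacency_matrix A" "is_clique A S" "S \<noteq> {}"
    and y: "y \<in> Delta_set" and supp: "\<And>l. l \<notin> S \<Longrightarrow> y $ l = 0"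
  shows "objective A y \<le> clique_value S"
  using quadratic_form_clique[OF assms(1,2) y supp] Phi_le_clique_vec(2)[OF assms(3) y supp]
  by (simp add: objective_def clique_value_def)

lemma clique_value_card_eq:
  assumes "S \<noteq> {}" "card S = card S'"
  shows "clique_value S' = clique_value S"
proof -
  have "\<Phi> (clique_vec S') = \<Phi> (clique_vec S)"
    by (rule perm_invariant[OF clique_vec_in_Delta_set[OF assms(1)] clique_vec_in_perm_set[OF assms(2)]])
  with assms(2) show ?thesis by (simp add: clique_value_def)
qed

lemma clique_value_psubset_less:
  assumes D: "D \<noteq> {}" and DE: "D \<subset> E"
  shows "clique_value D < clique_value E"
proof -
  obtain v where v: "v \<in> E" "v \<notin> D" using DE by auto
  have E: "E \<noteq> {}" using DE by auto
  have "clique_vec D \<noteq> clique_vec E"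
    using v by (auto simp: vec_eq_iff clique_vec_nth)
  moreover have "clique_vec D $ l = 0" if "l \<notin> E" for l
    using that DE by (auto simp: clique_vec_nth)
  ultimately have "\<Phi> (clique_vec D) + 1 / real (card E) < \<Phi> (clique_vec E) + 1 / real (card D)"
    using Phi_le_clique_vec(1)[OF E clique_vec_in_Delta_set[OF D]] inner_clique_vec_self[OF D]
    by simp
  then show ?thesis by (simp add: clique_value_def)
qed

lemma clique_value_card_less:
  assumes D: "D \<noteq> {}" and lt: "card D < card E"
  shows "clique_value D < clique_value E"
proof -
  obtain D' where D': "D' \<subseteq> E" "card D' = card D"
    using obtain_subset_with_card_n[of "card D" E] lt by auto
  have "D' \<noteq> {}" using D' D by auto
  have "clique_value D = clique_value D'" by (rule clique_value_card_eq[OF D D'(2)[symmetric], symmetric])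
  also have "\<dots> < clique_value E"
    using D' lt \<open>D' \<noteq> {}\<close> by (intro clique_value_psubset_less) auto
  finally show ?thesis .
qed

lemma clique_value_card_le:
  assumes "D \<noteq> {}" "card D \<le> card E"
  shows "clique_value D \<le> clique_value E"
proof (cases "card D = card E")
  case True
  then show ?thesis using clique_value_card_eq[OF assms(1) True] by simp
next
  case False
  with assms have "clique_value D < clique_value E" by (intro clique_value_card_less) auto
  then show ?thesis by simp
qed

lemma objective_line_lower_bound:
  assumes "y \<in> Delta_set" "y + t *\<^sub>R e \<in> Delta_set" "e \<bullet> (A *v e) = 0"
  shows "objective A y + t * (g y \<bullet> e + e \<bullet> (A *v y) + y \<bullet> (A *v e)) \<le> objective A (y + t *\<^sub>R e)"
  using quadratic_form_line[of y t e A] Phi_ge_linearization[OF assms(1,2)] assms(3)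
  by (simp add: objective_def algebra_simps)

lemma exists_smaller_support:
  fixes A :: "real^'n^'n"
  assumes adj: "adjacency_matrix A" and y: "y \<in> Delta_set"
    and not_clique: "\<not> is_clique A {l. y $ l \<noteq> 0}"
  obtains y' where "y' \<in> Delta_set" "{l. y' $ l \<noteq> 0} \<subset> {l. y $ l \<noteq> 0}"
    and "objective A y \<le> objective A y'"
proof -
  define slope where "slope e = g y \<bullet> e + e \<bullet> (A *v y) + y \<bullet> (A *v e)" for e
  have transfer: "\<exists>y'\<in>Delta_set. {l. y' $ l \<noteq> 0} \<subset> {l. y $ l \<noteq> 0} \<and> objective A y \<le> objective A y'"
    if ab: "y $ a \<noteq> 0" "y $ b \<noteq> 0" "a \<noteq> b" "A $ b $ a = 0"
    and slope_nonneg: "0 \<le> slope (axis b 1 - axis a 1)" for a b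
  proof -
    define y' where "y' = y + y $ a *\<^sub>R (axis b 1 - axis a 1)"
    have y': "y' \<in> Delta_set" "{l. y' $ l \<noteq> 0} \<subseteq> insert b {l. y $ l \<noteq> 0} - {a}"
      unfolding y'_def using transfer_mass[OF y ab(3)] by auto
    have "objective A y \<le> objective A y + y $ a * slope (axis b 1 - axis a 1)"
      using y slope_nonneg by (simp add: Delta_set_iff)
    also have "\<dots> \<le> objective A y'"
      unfolding slope_def y'_def
      by (rule objective_line_lower_bound[OF y])
        (use y' quadratic_form_non_edge[OF adj ab(4)] in \<open>simp_all add: y'_def\<close>)
    finally have "objective A y \<le> objective A y'" .
    moreover have "{l. y' $ l \<noteq> 0} \<subset> {l. y $ l \<noteq> 0}" using y'(2) ab by blast
    ultimately show ?thesis using y'(1) by blast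
  qed
  obtain i j where ij: "y $ i \<noteq> 0" "y $ j \<noteq> 0" "i \<noteq> j" "A $ i $ j \<noteq> 1"
    using not_clique unfolding is_clique_def by auto
  then have "A $ i $ j = 0" "A $ j $ i = 0"
    using adj unfolding adjacency_matrix_def by metis+
  moreover have "slope (axis i 1 - axis j 1) = - slope (axis j 1 - axis i 1)"
    unfolding slope_def by (simp add: inner_diff_left inner_diff_right algebra_simps)
  ultimately have "\<exists>y'\<in>Delta_set. {l. y' $ l \<noteq> 0} \<subset> {l. y $ l \<noteq> 0} \<and> objective A y \<le> objective A y'"
    using transfer[of j i] transfer[of i j] ij by (cases "0 \<le> slope (axis i 1 - axis j 1)") auto
  then show thesis using that by blast
qed

lemma objective_le_clique_value:
  fixes A :: "real^'n^'n"
  assumes adj: "adjacency_matrix A"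
  shows "y \<in> Delta_set \<Longrightarrow> \<exists>S. S \<noteq> {} \<and> is_clique A S \<and> objective A y \<le> clique_value S"
proof (induction "card {l. y $ l \<noteq> 0}" arbitrary: y rule: less_induct)
  case less
  show ?case
  proof (cases "is_clique A {l. y $ l \<noteq> 0}")
    case True
    have nonempty: "{l. y $ l \<noteq> 0} \<noteq> {}"
    proof
      assume "{l. y $ l \<noteq> 0} = {}"
      then have "y = 0" by (auto simp: vec_eq_iff)
      with less.prems show False by (simp add: Delta_set_iff)
    qed
    have "objective A y \<le> clique_value {l. y $ l \<noteq> 0}"
      by (rule objective_le_clique_value_on_face[OF adj True nonempty less.prems]) simp
    with True nonempty show ?thesis by (intro exI[where x = "{l. y $ l \<noteq> 0}"] conjI)
  next
    case False
    obtain y' where y': "y' \<in> Delta_set" "{l. y' $ l \<noteq> 0} \<subset> {l. y $ l \<noteq> 0}"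
      and le: "objective A y \<le> objective A y'"
      by (rule exists_smaller_support[OF adj less.prems False])
    obtain S where S: "S \<noteq> {}" "is_clique A S" "objective A y' \<le> clique_value S"
      using less.hyps[OF psubset_card_mono[OF _ y'(2)] y'(1)] by auto
    from le S(3) have "objective A y \<le> clique_value S" by (rule order_trans)
    with S(1,2) show ?thesis by blast
  qed
qed

lemma clique_vec_maximizes_objective_iff:
  assumes adj: "adjacency_matrix A" and clique: "is_clique A C" and nonempty: "C \<noteq> {}"
  shows "(\<forall>y\<in>Delta_set. objective A y \<le> objective A (clique_vec C)) \<longleftrightarrow> is_max_clique A C"
proof -
  have value_C: "objective A (clique_vec C) = clique_value C"
    by (rule objective_clique_vec[OF adj clique nonempty])
  show ?thesis
  proof
    assume max: "\<forall>y\<in>Delta_set. objective A y \<le> objective A (clique_vec C)"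
    have "card D \<le> card C" if D: "is_clique A D" for D
    proof (rule ccontr)
      assume "\<not> card D \<le> card C"
      then have lt: "card C < card D" by simp
      then have "D \<noteq> {}" by auto
      have "clique_value C < clique_value D" by (rule clique_value_card_less[OF nonempty lt])
      also have "clique_value D = objective A (clique_vec D)"
        by (rule objective_clique_vec[OF adj D \<open>D \<noteq> {}\<close>, symmetric])
      also have "\<dots> \<le> clique_value C"
        using max clique_vec_in_Delta_set[OF \<open>D \<noteq> {}\<close>] value_C by simp
      finally show False by simp
    qed
    with clique show "is_max_clique A C" unfolding is_max_clique_def by blast
  next
    assume max: "is_max_clique A C"
    show "\<forall>y\<in>Delta_set. objective A y \<le> objective A (clique_vec C)"
    proof
      fix y :: "real^'n"
      assume "y \<in> Delta_set"
      then obtain S where S: "S \<noteq> {}" "is_clique A S" "objective A y \<le> clique_value S"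
        using objective_le_clique_value[OF adj] by blast
      have "card S \<le> card C" using max S(2) unfolding is_max_clique_def by blast
      then have "clique_value S \<le> clique_value C" by (rule clique_value_card_le[OF S(1)])
      with S(3) value_C show "objective A y \<le> objective A (clique_vec C)" by simp
    qed
  qed
qed

end

theorem proposition4:
  fixes A :: "real^'n^'n"
    and \<Phi> :: "real^'n \<Rightarrow> real"
    and g :: "real^'n \<Rightarrow> real^'n"
    and H :: "real^'n \<Rightarrow> real^'n^'n"
    and X :: "(real^'n) set"
    and C :: "'n set"
  assumes adj: "adjacency_matrix A"
    and X_open: "open X" and X_sup: "Delta_set \<subseteq> X"
    and grad: "\<And>x. x \<in> X \<Longrightarrow> (\<Phi> has_derivative (\<lambda>h. g x \<bullet> h)) (at x)"
    and hess: "\<And>x. x \<in> X \<Longrightarrow> (g has_derivative (\<lambda>h. H x *v h)) (at x)"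
    and hess_cont: "continuous_on X H"
    and C1: "\<And>x v. x \<in> Delta_set \<Longrightarrow> 0 \<le> v \<bullet> (H x *v v)"
    and C2: "\<And>x. x \<in> Delta_set \<Longrightarrow> onorm (\<lambda>v. H x *v v) < 2"
    and C3: "\<And>x y. x \<in> Delta_set \<Longrightarrow> y \<in> perm_set x \<Longrightarrow> \<Phi> y = \<Phi> x"
    and clique: "is_clique A C" and nonempty: "C \<noteq> {}"
  shows "(\<forall>y\<in>Delta_set. y \<bullet> (A *v y) + \<Phi> y
            \<le> clique_vec C \<bullet> (A *v clique_vec C) + \<Phi> (clique_vec C))
         \<longleftrightarrow> is_max_clique A C"
proof -
  interpret symmetric_regularizer \<Phi> g H
    by unfold_locales (use X_sup grad hess C1 C2 C3 in auto)
  from clique_vec_maximizes_objective_iff[OF adj clique nonempty] show ?thesis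
    by (simp only: objective_def)
qed

end
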